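(* Let $a,b\in\mathbb{Z}$. The degree 4 symplectic polynomial $q(x)=x^4+ax^3+bx^2+ax+1$ satisfies the homological criterion (i.e. it is symplectically irreducible, is not a cyclotomic polynomial, and is not a polynomial in $x^k$ for any $k>1$) if and only if $a\ne0$, $(a,b)\notin\{(1,1),(-1,1)\}$, and $a^2-4b+8$ is not a perfect square.
   Context: A symplectic polynomial is an even-degree integer polynomial that is monic and palindromic (equivalently, the characteristic polynomial of an element of $\mathrm{Sp}(2n,\mathbb{Z})$). A symplectic polynomial is symplectically irreducible if it is not a product of two nontrivial symplectic polynomials. A cyclotomic polynomial is the minimal polynomial over $\mathbb{Q}$ of a primitive $n$-th root of unity. *)

theory Defs
  imports "HOL-Computational_Algebra.Computational_Algebra"
begin

definition symplectic_poly :: "int poly \<Rightarrow> bool" where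
  "symplectic_poly p \<longleftrightarrow> even (degree p) \<and> lead_coeff p = 1 \<and>
     (\<forall>i \<le> degree p. coeff p i = coeff p (degree p - i))"

definition symplectically_irreducible :: "int poly \<Rightarrow> bool" where
  "symplectically_irreducible p \<longleftrightarrow> symplectic_poly p \<and> degree p > 0 \<and>
     \<not> (\<exists>f g. symplectic_poly f \<and> symplectic_poly g \<and> degree f > 0 \<and> degree g > 0 \<and> p = f * g)"

definition primitive_root_of_unity :: "nat \<Rightarrow> complex \<Rightarrow> bool" where
  "primitive_root_of_unity n z \<longleftrightarrow> n > 0 \<and> z ^ n = 1 \<and> (\<forall>k. 0 < k \<and> k < n \<longrightarrow> z ^ k \<noteq> 1)"

text \<open>Cyclotomic: the minimal polynomial over Q (monic, irreducible over Q) of a primitive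
  n-th root of unity.\<close>
definition cyclotomic_poly :: "int poly \<Rightarrow> bool" where
  "cyclotomic_poly p \<longleftrightarrow> lead_coeff p = 1 \<and> irreducible (map_poly (of_int :: int \<Rightarrow> rat) p) \<and>
     (\<exists>n z. primitive_root_of_unity n z \<and> poly (map_poly (of_int :: int \<Rightarrow> complex) p) z = 0)"

definition poly_in_power :: "int poly \<Rightarrow> nat \<Rightarrow> bool" where
  "poly_in_power p k \<longleftrightarrow> (\<exists>r :: int poly. p = pcompose r (monom 1 k))"

definition homological_criterion :: "int poly \<Rightarrow> bool" where
  "homological_criterion p \<longleftrightarrow> symplectically_irreducible p \<and> \<not> cyclotomic_poly p \<and>
     \<not> (\<exists>k > 1. poly_in_power p k)"

end

(* Write q(x) = x^2 r(x + 1/x) with r(t) = t^2 + a t + b - 2, of discriminant a^2 - 4b + 8.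
   Symplectic factors of q are quadratics x^2 + c x + 1, so a symplectic factorisation of q is
   an integer factorisation of r: q is symplectically irreducible iff the discriminant is not a
   square. The x-coefficient of a polynomial in x^k (k > 1) vanishes, and x^4 + b x^2 + 1 is one.
   If a <> 0 and the discriminant is not a square, Gauss's lemma and an inspection of integer
   factorisations make q irreducible over Q, so if one root of q is a root of unity then all
   are; then both roots t = w + 1/w of r are real and lie in [-2, 2], which leaves only
   a = +-1, b = 1, where (x - a) q(x) = x^5 - a. *)

theory Submission
  imports Defs "Berlekamp_Zassenhaus.Factor_Bound"
begin

hide_const (open) up_ring.coeff up_ring.monom

lemma poly_eq_coeffs_of_degree_le_1:
  "degree (p :: 'a :: zero poly) \<le> 1 \<Longrightarrow> p = [:coeff p 0, coeff p 1:]"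
  by (rule poly_eqI) (auto simp: coeff_pCons coeff_eq_0 split: nat.splits)

lemma poly_eq_coeffs_of_degree_le_2:
  "degree (p :: 'a :: zero poly) \<le> 2 \<Longrightarrow> p = [:coeff p 0, coeff p 1, coeff p 2:]"
  by (rule poly_eqI) (auto simp: coeff_pCons coeff_eq_0 numeral_2_eq_2 split: nat.splits)

lemma mult_quadratic_polys:
  fixes g0 g1 g2 h0 h1 h2 :: "'a :: comm_semiring_1"
  shows "[:g0, g1, g2:] * [:h0, h1, h2:] =
    [:g0 * h0, g0 * h1 + g1 * h0, g0 * h2 + g1 * h1 + g2 * h0, g1 * h2 + g2 * h1, g2 * h2:]"
  by (simp add: mult_pCons_left smult_add_right add_pCons algebra_simps del: mult_pCons_right)

lemma mult_palindromic_quadratics: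
  fixes c d :: "'a :: comm_semiring_1"
  shows "[:1, c, 1:] * [:1, d, 1:] = [:1, c + d, c * d + 2, c + d, 1:]"
proof -
  have "1 * 1 + c * d + 1 * 1 = c * d + (2 :: 'a)"
    by (simp add: ac_simps flip: one_add_one)
  then show ?thesis
    using mult_quadratic_polys[of 1 c 1 1 d 1] by (simp only: mult_1 mult_1_right add.commute)
qed

lemma complex_quadratic_has_root: "\<exists>z :: complex. z^2 + p * z + q = 0"
proof
  define s where "s = csqrt (p^2 - 4*q)"
  have "s^2 = p^2 - 4*q" by (simp add: s_def)
  then show "((s - p) / 2)^2 + p * ((s - p) / 2) + q = 0"
    by (simp add: power2_eq_square field_simps)
qed

lemma abs_add_plus_abs_diff_le:
  fixes x y c :: "'a :: linordered_idom"
  assumes "\<bar>x\<bar> \<le> c" "\<bar>y\<bar> \<le> c"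
  shows "\<bar>x + y\<bar> + \<bar>x - y\<bar> \<le> 2 * c"
  using assms unfolding abs_if by auto

lemma square_discriminant_iff_sum_product:
  fixes a b :: int
  shows "(\<exists>m. a^2 - 4*b + 8 = m^2) \<longleftrightarrow> (\<exists>c d. a = c + d \<and> b = c * d + 2)"
proof
  assume "\<exists>m. a^2 - 4*b + 8 = m^2"
  then obtain m where m: "a^2 - 4*b + 8 = m^2" ..
  then have "(a - m) * (a + m) = 2 * (2 * b - 4)"
    by (simp add: power2_eq_square algebra_simps)
  moreover have "even (a - m) \<longleftrightarrow> even (a + m)" by presburger
  ultimately have "even (a - m)" by (metis dvd_triv_left even_mult_iff)
  then obtain c where c: "a - m = 2 * c" ..
  have "4 * b = 4 * (c * (a - c) + 2)"
    using m c by (simp add: power2_eq_square algebra_simps)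
  then have "a = c + (a - c)" "b = c * (a - c) + 2" by simp_all
  then show "\<exists>c d. a = c + d \<and> b = c * d + 2" by blast
next
  assume "\<exists>c d. a = c + d \<and> b = c * d + 2"
  then obtain c d where "a = c + d" "b = c * d + 2" by blast
  then have "a^2 - 4*b + 8 = (c - d)^2" by (simp add: power2_eq_square algebra_simps)
  then show "\<exists>m. a^2 - 4*b + 8 = m^2" ..
qed

lemma nonsquare_discriminant_small_cases:
  fixes a b :: int
  assumes "a \<noteq> 0" "\<not> (\<exists>m. a^2 - 4*b + 8 = m^2)"
    and "0 \<le> a^2 - 4*b + 8" "\<bar>a\<bar> \<le> 4" "a^2 - 4*b + 8 \<le> (4 - \<bar>a\<bar>)^2"
  shows "(a, b) \<in> {(1, 1), (-1, 1)}"
proof -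
  define n where "n = \<bar>a\<bar>"
  have "a^2 - 4*b + 8 \<noteq> m^2" for m using assms(2) by blast
  from this[of 0] this[of 1] this[of 2] this[of 3]
  have "n^2 - 4*b + 8 \<notin> {0, 1, 4, 9}" "0 \<le> n^2 - 4*b + 8" "n^2 - 4*b + 8 \<le> (4 - n)^2"
    using assms(3,5) by (auto simp: n_def)
  moreover have "n \<in> {1, 2, 3, 4}" using assms(1,4) by (auto simp: n_def)
  ultimately have "n = 1 \<and> b = 1" by (elim insertE emptyE) simp_all
  then show ?thesis unfolding n_def by (cases "a < 0") auto
qed

lemma symplectic_poly_palindromic_quadratic: "symplectic_poly [:1, c, 1:]"
  unfolding symplectic_poly_def by (auto simp: numeral_eq_Suc le_Suc_eq)

lemma symplectic_poly_palindromic_quartic: "symplectic_poly [:1, a, b, a, 1:]"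
  unfolding symplectic_poly_def
proof (intro conjI allI impI)
  fix i assume "i \<le> degree [:1, a, b, a, 1:]"
  then have "i \<in> {0, 1, 2, 3, 4}" by auto
  then show "coeff [:1, a, b, a, 1:] i = coeff [:1, a, b, a, 1:] (degree [:1, a, b, a, 1:] - i)"
    by (auto simp: numeral_eq_Suc)
qed auto

lemma symplectic_poly_degree_2:
  assumes "symplectic_poly f" "degree f = 2"
  shows "f = [:1, coeff f 1, 1:]"
proof -
  have "coeff f 2 = 1" "coeff f 0 = coeff f 2"
    using assms unfolding symplectic_poly_def by (auto dest: spec[of _ 0])
  with poly_eq_coeffs_of_degree_le_2[of f] assms(2) show ?thesis by simp
qed

lemma palindromic_quartic_symplectic_factors:
  fixes a b :: int
  assumes f: "symplectic_poly f" "0 < degree f" and g: "symplectic_poly g" "0 < degree g"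
    and fg: "[:1, a, b, a, 1:] = f * g"
  shows "\<exists>c d. a = c + d \<and> b = c * d + 2"
proof -
  have "f \<noteq> 0" "g \<noteq> 0" using f(2) g(2) by auto
  then have "degree f + degree g = degree [:1, a, b, a, 1:]"
    unfolding fg by (rule degree_mult_eq[symmetric])
  then have "degree f + degree g = 4" by simp
  moreover have "even (degree f)" "even (degree g)"
    using f(1) g(1) unfolding symplectic_poly_def by auto
  ultimately have "degree f = 2" "degree g = 2" using f(2) g(2) by presburger+
  then obtain c d where "f = [:1, c, 1:]" "g = [:1, d, 1:]"
    using symplectic_poly_degree_2 f(1) g(1) by blast
  with fg have "[:1, a, b, a, 1:] = [:1, c + d, c * d + 2, c + d, 1:]"
    by (simp only: mult_palindromic_quadratics)
  then show ?thesis by auto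
qed

lemma symplectically_irreducible_palindromic_quartic_iff:
  fixes a b :: int
  shows "symplectically_irreducible [:1, a, b, a, 1:] \<longleftrightarrow> \<not> (\<exists>m. a^2 - 4*b + 8 = m^2)"
proof -
  have "(\<exists>f g. symplectic_poly f \<and> symplectic_poly g \<and> 0 < degree f \<and> 0 < degree g \<and>
            [:1, a, b, a, 1:] = f * g) \<longleftrightarrow> (\<exists>c d. a = c + d \<and> b = c * d + 2)"
  proof
    assume "\<exists>f g. symplectic_poly f \<and> symplectic_poly g \<and> 0 < degree f \<and> 0 < degree g \<and>
              [:1, a, b, a, 1:] = f * g"
    then show "\<exists>c d. a = c + d \<and> b = c * d + 2"
      using palindromic_quartic_symplectic_factors by blast
  next
    assume "\<exists>c d. a = c + d \<and> b = c * d + 2"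
    then obtain c d where "a = c + d" "b = c * d + 2" by blast
    then have "[:1, a, b, a, 1:] = [:1, c, 1:] * [:1, d, 1:]"
      by (simp only: mult_palindromic_quadratics)
    then show "\<exists>f g. symplectic_poly f \<and> symplectic_poly g \<and> 0 < degree f \<and> 0 < degree g \<and>
                 [:1, a, b, a, 1:] = f * g"
      using symplectic_poly_palindromic_quadratic by fastforce
  qed
  then show ?thesis
    unfolding symplectically_irreducible_def square_discriminant_iff_sum_product
    using symplectic_poly_palindromic_quartic by simp
qed

lemma poly_in_power_coeff_1:
  assumes "poly_in_power p k" "1 < k"
  shows "coeff p 1 = 0"
proof -
  from assms(1) obtain r where "p = r \<circ>\<^sub>p monom 1 k"
    unfolding poly_in_power_def by blast
  with coeff_pcompose_monom[of 1 k r 0] assms(2) show ?thesis by simp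
qed

lemma pcompose_palindromic_quadratic_monom_2:
  "[:1, b, 1 :: 'a :: comm_ring_1:] \<circ>\<^sub>p monom 1 2 = [:1, 0, b, 0, 1:]"
  by (simp add: pcompose_pCons monom_altdef power2_eq_square add_pCons flip: pCons_one)

lemma poly_in_power_palindromic_quartic_iff:
  "(\<exists>k > 1. poly_in_power [:1, a, b, a, 1:] k) \<longleftrightarrow> a = 0"
proof
  assume "\<exists>k > 1. poly_in_power [:1, a, b, a, 1:] k"
  then obtain k where "poly_in_power [:1, a, b, a, 1:] k" "1 < k" by blast
  from poly_in_power_coeff_1[OF this] show "a = 0" by simp
next
  assume "a = 0"
  then have "[:1, a, b, a, 1:] = [:1, b, 1:] \<circ>\<^sub>p monom 1 2"
    by (simp only: pcompose_palindromic_quadratic_monom_2)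
  then have "poly_in_power [:1, a, b, a, 1:] 2" unfolding poly_in_power_def ..
  moreover have "(1 :: nat) < 2" by simp
  ultimately show "\<exists>k > 1. poly_in_power [:1, a, b, a, 1:] k" by blast
qed

lemma palindromic_quartic_linear_factor:
  fixes a b :: int
  assumes q: "[:1, a, b, a, 1:] = g * h" and g: "degree g = 1"
  shows "\<exists>c d. a = c + d \<and> b = c * d + 2"
proof -
  have "lead_coeff g * lead_coeff h = 1" "coeff g 0 * coeff h 0 = 1"
    using arg_cong[OF q, of lead_coeff] arg_cong[OF q, of "\<lambda>p. coeff p 0"]
    by (simp_all add: lead_coeff_mult coeff_mult_0)
  then have units: "coeff g 1 \<in> {1, -1}" "coeff g 0 \<in> {1, -1}"
    using g by (auto simp: zmult_eq_1_iff)
  \<comment> \<open>the root \<open>- g\<^sub>0 / g\<^sub>1\<close> of \<open>g\<close>, as \<open>g\<^sub>1 = \<plusminus>1\<close>\<close>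
  define r where "r = - coeff g 0 * coeff g 1"
  have r: "r \<in> {1, -1}" using units unfolding r_def by auto
  have "poly g r = 0"
    using units g unfolding r_def by (subst poly_eq_coeffs_of_degree_le_1[of g]) auto
  then have "poly [:1, a, b, a, 1:] r = 0" using q by simp
  with r have "b = - 2 - 2 * a * r" by auto
  with r show ?thesis
    by (intro exI[of _ "- 2 * r"] exI[of _ "a + 2 * r"]) (auto simp: algebra_simps)
qed

lemma palindromic_quartic_quadratic_factors:
  fixes a b :: int
  assumes q: "[:1, a, b, a, 1:] = g * h" and "degree g = 2" "degree h = 2"
  shows "a = 0 \<or> (\<exists>c d. a = c + d \<and> b = c * d + 2)"
proof -
  obtain g0 g1 g2 h0 h1 h2 where "g = [:g0, g1, g2:]" "h = [:h0, h1, h2:]"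
    using poly_eq_coeffs_of_degree_le_2 assms(2,3) by (metis order_refl)
  with q have "[:1, a, b, a, 1:] = [:g0 * h0, g0 * h1 + g1 * h0, g0 * h2 + g1 * h1 + g2 * h0,
      g1 * h2 + g2 * h1, g2 * h2:]"
    by (simp only: mult_quadratic_polys)
  then have e: "g0 * h0 = 1" "a = g0 * h1 + g1 * h0" "b = g0 * h2 + g1 * h1 + g2 * h0"
    "a = g1 * h2 + g2 * h1" "g2 * h2 = 1"
    by simp_all
  then have units: "g0 \<in> {1, -1}" "h0 = g0" "g2 \<in> {1, -1}" "h2 = g2"
    by (auto simp: zmult_eq_1_iff)
  show ?thesis
  proof (cases "g2 = g0")
    case True
    then have "a = g0 * g1 + g0 * h1" "b = (g0 * g1) * (g0 * h1) + 2"
      using e units by (auto simp: algebra_simps)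
    then show ?thesis by blast
  next
    case False
    then have "g2 = - g0" using units by auto
    then show ?thesis using e units by (auto simp: algebra_simps)
  qed
qed

lemma irreducible_palindromic_quartic_rat:
  fixes a b :: int
  assumes "a \<noteq> 0" "\<not> (\<exists>m. a^2 - 4*b + 8 = m^2)"
  shows "irreducible (map_poly rat_of_int [:1, a, b, a, 1:])"
proof (rule irreducibleI)
  let ?q = "map_poly rat_of_int [:1, a, b, a, 1:]"
  have "degree ?q = 4" by simp
  then show "?q \<noteq> 0" "\<not> is_unit ?q" by (auto simp: is_unit_iff_degree)
  fix g h assume gh: "?q = g * h"
  show "is_unit g \<or> is_unit h"
  proof (rule ccontr)
    assume "\<not> (is_unit g \<or> is_unit h)"
    moreover have "g \<noteq> 0" "h \<noteq> 0" using gh \<open>?q \<noteq> 0\<close> by auto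
    ultimately have "0 < degree g" "0 < degree h" by (auto simp: is_unit_iff_degree)
    moreover have "degree g + degree h = 4"
      using \<open>degree ?q = 4\<close> \<open>g \<noteq> 0\<close> \<open>h \<noteq> 0\<close> unfolding gh by (simp add: degree_mult_eq)
    moreover obtain g' h' where gh': "[:1, a, b, a, 1:] = g' * h'"
      and "degree g' = degree g" "degree h' = degree h"
      using rat_to_int_factor[OF gh] by blast
    ultimately have "degree g' = 1 \<or> degree h' = 1 \<or> (degree g' = 2 \<and> degree h' = 2)"
      by linarith
    then have "\<exists>c d. a = c + d \<and> b = c * d + 2"
    proof (elim disjE conjE)
      assume "degree g' = 1"
      then show ?thesis by (rule palindromic_quartic_linear_factor[OF gh'])
    next
      assume "degree h' = 1"
      with gh' show ?thesis by (metis mult.commute palindromic_quartic_linear_factor)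
    next
      assume "degree g' = 2" "degree h' = 2"
      then show ?thesis using palindromic_quartic_quadratic_factors[OF gh'] assms(1) by blast
    qed
    with assms(2) show False unfolding square_discriminant_iff_sum_product by blast
  qed
qed

lemma irreducible_dvd_of_common_root:
  fixes p f :: "rat poly" and z :: complex
  assumes "irreducible p"
    and "poly (map_poly of_rat p) z = 0" "poly (map_poly of_rat f) z = 0"
  shows "p dvd f"
proof (rule ccontr)
  interpret field_hom' "of_rat :: rat \<Rightarrow> complex" ..
  assume "\<not> p dvd f"
  with assms(1) have "coprime p f"
    by (simp add: irreducible_imp_prime_elem prime_elem_imp_coprime)
  then have "gcd (map_poly of_rat p) (map_poly of_rat f) = (1 :: complex poly)"
    by (simp flip: map_poly_gcd)
  moreover have "[:-z, 1:] dvd gcd (map_poly of_rat p) (map_poly of_rat f)"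
    using assms(2,3) by (simp add: poly_eq_0_iff_dvd)
  ultimately show False by (simp add: is_unit_iff_degree)
qed

lemma irreducible_root_of_unity_all_roots:
  fixes p :: "rat poly" and z w :: complex
  assumes "irreducible p" "z ^ N = 1"
    and "poly (map_poly of_rat p) z = 0" "poly (map_poly of_rat p) w = 0"
  shows "w ^ N = 1"
proof -
  interpret map_poly_comm_ring_hom "of_rat :: rat \<Rightarrow> complex" ..
  have unity: "map_poly of_rat (monom 1 N - 1) = (monom 1 N - 1 :: complex poly)"
    by (simp add: hom_distribs map_poly_monom)
  with assms have "p dvd monom 1 N - 1"
    by (intro irreducible_dvd_of_common_root) (simp_all add: poly_monom)
  then have "map_poly of_rat p dvd (monom 1 N - 1 :: complex poly)"
    unfolding unity[symmetric] by (rule hom_dvd)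
  then obtain r :: "complex poly" where "monom 1 N - 1 = map_poly of_rat p * r" ..
  then have "poly (monom 1 N - 1) w = 0" using assms(4) by simp
  then show ?thesis by (simp add: poly_monom)
qed

lemma unimodular_trace_real_bounded:
  fixes w t :: complex
  assumes "norm w = 1" "w^2 - t * w + 1 = 0"
  shows "Im t = 0 \<and> \<bar>Re t\<bar> \<le> 2"
proof -
  have "w * cnj w = 1" using assms(1) complex_norm_square[of w] by simp
  then have "t * w = (w + cnj w) * w" using assms(2) by (simp add: power2_eq_square algebra_simps)
  then have "t = w + cnj w" using \<open>w * cnj w = 1\<close> by auto
  moreover have "\<bar>Re w\<bar> \<le> 1" using abs_Re_le_cmod[of w] assms(1) by simp
  ultimately show ?thesis by simp
qed

lemma trace_roots_real_bounded:
  fixes a b :: int and z t :: complex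
  assumes irr: "irreducible (map_poly rat_of_int [:1, a, b, a, 1:])"
    and z: "poly (map_poly of_int [:1, a, b, a, 1:]) z = 0" "z ^ N = 1" "0 < N"
    and t: "t^2 + of_int a * t + of_int b - 2 = 0"
  shows "Im t = 0 \<and> \<bar>Re t\<bar> \<le> 2"
proof -
  obtain w where w: "w^2 - t * w + 1 = 0"
    using complex_quadratic_has_root[of "- t" 1] by auto
  \<comment> \<open>\<open>q(w) = w\<^sup>2 r(w + 1/w)\<close>, written without division\<close>
  have "poly (map_poly of_int [:1, a, b, a, 1:]) w =
      (w^2 - t * w + 1) * (w^2 + (of_int a + t) * w + 1) + (t^2 + of_int a * t + of_int b - 2) * w^2"
    by (simp add: algebra_simps power2_eq_square power_numeral_reduce)
  then have "poly (map_poly of_int [:1, a, b, a, 1:]) w = 0" using w t by simp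
  moreover have "map_poly of_rat (map_poly rat_of_int [:1, a, b, a, 1:]) =
      (map_poly of_int [:1, a, b, a, 1:] :: complex poly)"
    by (simp add: map_poly_map_poly o_def)
  ultimately have "w ^ N = 1"
    using z(1) by (intro irreducible_root_of_unity_all_roots[OF irr z(2)]) simp_all
  then have "norm w = 1" using z(3) power_eq_1_iff by blast
  then show ?thesis using unimodular_trace_real_bounded w by blast
qed

lemma discriminant_bounds_of_bounded_roots:
  fixes a b :: int and x y :: real
  assumes "\<bar>x\<bar> \<le> 2" "\<bar>y\<bar> \<le> 2" and a: "of_int a = - (x + y)" and b: "of_int b = x * y + 2"
  shows "0 \<le> a^2 - 4*b + 8" "\<bar>a\<bar> \<le> 4" "a^2 - 4*b + 8 \<le> (4 - \<bar>a\<bar>)^2"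
proof -
  have "of_int (a^2 - 4*b + 8) = (of_int a)^2 - 4 * of_int b + (8 :: real)" by simp
  also have "\<dots> = (x - y)^2" unfolding a b by (simp add: power2_eq_square algebra_simps)
  finally have disc: "of_int (a^2 - 4*b + 8) = (x - y)^2" .
  then have "real_of_int 0 \<le> of_int (a^2 - 4*b + 8)" by simp
  then show "0 \<le> a^2 - 4*b + 8" by (simp only: of_int_le_iff)
  have "\<bar>x + y\<bar> + \<bar>x - y\<bar> \<le> 4"
    using abs_add_plus_abs_diff_le[OF assms(1,2)] by simp
  then have a4: "\<bar>a\<bar> \<le> 4" and "\<bar>x - y\<bar> \<le> of_int (4 - \<bar>a\<bar>)"
    using a by linarith+
  show "\<bar>a\<bar> \<le> 4" by (fact a4)
  from \<open>\<bar>x - y\<bar> \<le> _\<close> have "\<bar>x - y\<bar>^2 \<le> (of_int (4 - \<bar>a\<bar>))^2" by (intro power_mono) simp_all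
  then have "(x - y)^2 \<le> of_int ((4 - \<bar>a\<bar>)^2)" by simp
  then have "real_of_int (a^2 - 4*b + 8) \<le> of_int ((4 - \<bar>a\<bar>)^2)" by (simp only: disc)
  then show "a^2 - 4*b + 8 \<le> (4 - \<bar>a\<bar>)^2" by (simp only: of_int_le_iff)
qed

lemma cyclotomic_palindromic_quartic_cases:
  fixes a b :: int
  assumes "a \<noteq> 0" "\<not> (\<exists>m. a^2 - 4*b + 8 = m^2)" "cyclotomic_poly [:1, a, b, a, 1:]"
  shows "(a, b) \<in> {(1, 1), (-1, 1)}"
proof -
  from assms(3) obtain n z where irr: "irreducible (map_poly rat_of_int [:1, a, b, a, 1:])"
    and "primitive_root_of_unity n z" and root: "poly (map_poly of_int [:1, a, b, a, 1:]) z = 0"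
    unfolding cyclotomic_poly_def by blast
  then have "z ^ n = 1" "0 < n" unfolding primitive_root_of_unity_def by auto
  note real_bounded = trace_roots_real_bounded[OF irr root this]
  obtain t1 :: complex where t1: "t1^2 + of_int a * t1 + of_int b - 2 = 0"
    using complex_quadratic_has_root[of "of_int a" "of_int b - 2"] by (auto simp: algebra_simps)
  define t2 where "t2 = - of_int a - t1"
  have t2: "t2^2 + of_int a * t2 + of_int b - 2 = 0" "t1 * t2 = of_int b - 2"
    using t1 by (simp_all add: t2_def power2_eq_square algebra_simps)
  have "Im t1 = 0" "\<bar>Re t1\<bar> \<le> 2" "Im t2 = 0" "\<bar>Re t2\<bar> \<le> 2"
    using real_bounded[OF t1] real_bounded[OF t2(1)] by simp_all
  moreover from this have "of_int a = - (Re t1 + Re t2)" "of_int b = Re t1 * Re t2 + 2"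
    using arg_cong[OF t2(2), of Re] by (simp_all add: t2_def)
  ultimately show ?thesis
    using discriminant_bounds_of_bounded_roots nonsquare_discriminant_small_cases assms(1,2)
    by metis
qed

lemma primitive_root_of_unity_exists:
  assumes "z ^ N = 1" "0 < N"
  shows "\<exists>n. primitive_root_of_unity n z"
proof -
  define n where "n = (LEAST k. 0 < k \<and> z ^ k = 1)"
  have "0 < n \<and> z ^ n = 1"
    unfolding n_def by (rule LeastI[of _ N]) (use assms in auto)
  moreover have "z ^ k \<noteq> 1" if "0 < k" "k < n" for k
    using not_less_Least[of k] that unfolding n_def by blast
  ultimately show ?thesis unfolding primitive_root_of_unity_def by blast
qed

lemma palindromic_quartic_tenth_roots_of_unity:
  fixes a :: int and z :: complex
  assumes "a^2 = 1" "poly (map_poly of_int [:1, a, 1, a, 1:]) z = 0"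
  shows "z ^ 10 = 1"
proof -
  have "(z - of_int a) * poly (map_poly of_int [:1, a, 1, a, 1:]) z =
      z^5 - of_int a + (1 - of_int (a^2)) * (z^3 + z)"
    by (simp add: algebra_simps power2_eq_square power_numeral_reduce)
  then have "z^5 = of_int a" using assms by simp
  have "z^10 = (z^5)^2" by (simp flip: power_mult)
  also have "\<dots> = 1" using \<open>z^5 = of_int a\<close> assms(1) by (metis of_int_1 of_int_power)
  finally show ?thesis .
qed

lemma cyclotomic_palindromic_quartic_iff:
  fixes a b :: int
  assumes "a \<noteq> 0" "\<not> (\<exists>m. a^2 - 4*b + 8 = m^2)"
  shows "cyclotomic_poly [:1, a, b, a, 1:] \<longleftrightarrow> (a, b) \<in> {(1, 1), (-1, 1)}"
proof
  assume "cyclotomic_poly [:1, a, b, a, 1:]"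
  then show "(a, b) \<in> {(1, 1), (-1, 1)}" by (rule cyclotomic_palindromic_quartic_cases[OF assms])
next
  assume ab: "(a, b) \<in> {(1, 1), (-1, 1)}"
  have "degree (map_poly of_int [:1, a, b, a, 1:] :: complex poly) = 4" by simp
  then obtain z :: complex where z: "poly (map_poly of_int [:1, a, b, a, 1:]) z = 0"
    using fundamental_theorem_of_algebra constant_degree by (metis zero_neq_numeral)
  have "a^2 = 1" "b = 1" using ab by auto
  with z have "z ^ 10 = 1" by (metis palindromic_quartic_tenth_roots_of_unity)
  then obtain n where "primitive_root_of_unity n z" using primitive_root_of_unity_exists[of z 10] by auto
  with z show "cyclotomic_poly [:1, a, b, a, 1:]"
    unfolding cyclotomic_poly_def using irreducible_palindromic_quartic_rat[OF assms] by auto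
qed

theorem proposition4p1:
  fixes a b :: int
  shows "homological_criterion [:1, a, b, a, 1:] \<longleftrightarrow>
    a \<noteq> 0 \<and> (a, b) \<notin> {(1, 1), (-1, 1)} \<and> \<not> (\<exists>m :: int. a^2 - 4*b + 8 = m^2)"
  unfolding homological_criterion_def symplectically_irreducible_palindromic_quartic_iff
    poly_in_power_palindromic_quartic_iff
  using cyclotomic_palindromic_quartic_iff[of a b] by blast

end
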